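(* Let $(L,\le,\bot,\top)$ be a complete lattice and $(\&_i,\swarrow^i,\nwarrow_i)$, $i=1,\dots,n$, adjoint triples on $L$ with $x\,\&_i\,\top=\top\,\&_i\,x=x$ for all $x\in L$ and all $i$. Let $(A,B,R,\sigma)$ be a normalized context whose concept lattice $\mathcal{M}$ has a decomposition into independent blocks $\{K_\mu\}_{\mu\in\Lambda}$, and let $A_\mu,B_\mu$ be the associated sets defined below. Then $(A_\mu,B_\mu,R_\mu,\sigma_\mu)$, where $R_\mu,\sigma_\mu$ are the restrictions of $R,\sigma$ to $A_\mu\times B_\mu$, is a separable subcontext of $(A,B,R,\sigma)$ for every $\mu\in\Lambda$.
   Context: An adjoint triple on $L$ is a triple of maps $\&,\swarrow,\nwarrow\colon L\times L\to L$ with $x\le z\swarrow y\iff x\& y\le z\iff y\le z\nwarrow x$. A context is $(A,B,R,\sigma)$ with $A,B$ non-empty, $R\colon A\times B\to L$, $\sigma\colon A\times B\to\{1,\dots,n\}$; normalized means every $a\in A$ has $b_1,b_2$ with $R(a,b_1)\ne\bot$, $R(a,b_2)=\bot$, and every $b\in B$ has $a_1,a_2$ with $R(a_1,b)\ne\bot$, $R(a_2,b)=\bot$. For $g\colon B\to L$, $f\colon A\to L$: $g^\uparrow(a)=\inf_{b}R(a,b)\swarrow^{\sigma(a,b)}g(b)$, $f^\downarrow(b)=\inf_{a}R(a,b)\nwarrow_{\sigma(a,b)}f(a)$. $\mathcal{M}$ is the complete lattice of pairs $\langle g,f\rangle$ with $g^\uparrow=f$, $f^\downarrow=g$, ordered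 by $g_1\le g_2$ pointwise; top $\langle g_\top,f_\bot\rangle$, bottom $\langle g_\bot,f_\top\rangle$ ($g_\top,g_\bot,f_\top,f_\bot$ constant maps). $\phi_{a,x}\colon A\to L$ takes value $x$ at $a$ and $\bot$ elsewhere; $\phi_{b,y}\colon B\to L$ takes value $y$ at $b$ and $\bot$ elsewhere. For a bounded lattice $(M,\preceq,\bot,\top)$, a block is a sublattice $K\subsetneq M$ with $K\setminus\{\bot,\top\}\ne\varnothing$ and $(\{x\mid k\preceq x\}\cup\{x\mid x\preceq k\})\setminus\{\bot,\top\}\subseteq K$ for all $k\in K\setminus\{\bot,\top\}$; blocks $K_1,K_2$ are independent if $K_1\cap K_2\subseteq\{\bot,\top\}$; a decomposition into independent blocks is a family of pairwise independent blocks whose union is $M$. With $K_\mu^*=K_\mu\setminus\{\langle g_\top,f_\bot\rangle,\langle g_\bot,f_\top\rangle\}$: $A_\mu=\{a\in A\mid\langle\phi_{a,x}^\downarrow,\phi_{a,x}^{\downarrow\uparrow}\rangle\in K_\mu^*\text{ for some }x\in L\}$ and $B_\mu=\{b\in B\mid\langle\phi_{b,y}^{\uparrow\downarrow},\phi_{b,y}^{\uparrow}\rangle\in K_\mu^*\text{ for some }y\in L\}$. A separable subcontext is a tuple $(Y,X,R_{Y\times X},\sigma_{Y\times X})$ with $Y\subsetneq A$, $X\subsetneq B$ non-empty, such that $R(a,b)\ne\bot$ for some $a\in Y,b\in X$, $R(a,b')=\bot$ for all $(a,b')\in Y\times(B\setminus X)$, and $R(a',b)=\bot$ for all $(a',b)\in(A\setminus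 Y)\times X$. *)

theory Defs
  imports Main
begin

text \<open>The sets A and B of
 the context are represented by the (non-empty) types 'a and 'b. The adjoint triples
 are indexed by i :: nat; conj i x y = x &_i y, sw i z y = z \<swarrow>^i y, nw i z x = z \<nwarrow>_i x.\<close>

definition adjoint_triple ::
  "('l::complete_lattice \<Rightarrow> 'l \<Rightarrow> 'l) \<Rightarrow> ('l \<Rightarrow> 'l \<Rightarrow> 'l) \<Rightarrow> ('l \<Rightarrow> 'l \<Rightarrow> 'l) \<Rightarrow> bool" where
  "adjoint_triple cj sw nw \<longleftrightarrow>
     (\<forall>x y z. (x \<le> sw z y \<longleftrightarrow> cj x y \<le> z) \<and> (cj x y \<le> z \<longleftrightarrow> y \<le> nw z x))"

definition normalized_context :: "('a \<Rightarrow> 'b \<Rightarrow> 'l::complete_lattice) \<Rightarrow> bool" where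
  "normalized_context R \<longleftrightarrow>
     (\<forall>a. \<exists>b1 b2. R a b1 \<noteq> bot \<and> R a b2 = bot) \<and>
     (\<forall>b. \<exists>a1 a2. R a1 b \<noteq> bot \<and> R a2 b = bot)"

definition up_op ::
  "(nat \<Rightarrow> 'l \<Rightarrow> 'l \<Rightarrow> 'l::complete_lattice) \<Rightarrow> ('a \<Rightarrow> 'b \<Rightarrow> 'l) \<Rightarrow> ('a \<Rightarrow> 'b \<Rightarrow> nat)
    \<Rightarrow> ('b \<Rightarrow> 'l) \<Rightarrow> ('a \<Rightarrow> 'l)" where
  "up_op sw R \<sigma> g = (\<lambda>a. INF b. sw (\<sigma> a b) (R a b) (g b))"

definition down_op ::
  "(nat \<Rightarrow> 'l \<Rightarrow> 'l \<Rightarrow> 'l::complete_lattice) \<Rightarrow> ('a \<Rightarrow> 'b \<Rightarrow> 'l) \<Rightarrow> ('a \<Rightarrow> 'b \<Rightarrow> nat)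
    \<Rightarrow> ('a \<Rightarrow> 'l) \<Rightarrow> ('b \<Rightarrow> 'l)" where
  "down_op nw R \<sigma> f = (\<lambda>b. INF a. nw (\<sigma> a b) (R a b) (f a))"

definition concepts ::
  "(nat \<Rightarrow> 'l \<Rightarrow> 'l \<Rightarrow> 'l::complete_lattice) \<Rightarrow> (nat \<Rightarrow> 'l \<Rightarrow> 'l \<Rightarrow> 'l) \<Rightarrow> ('a \<Rightarrow> 'b \<Rightarrow> 'l)
    \<Rightarrow> ('a \<Rightarrow> 'b \<Rightarrow> nat) \<Rightarrow> (('b \<Rightarrow> 'l) \<times> ('a \<Rightarrow> 'l)) set" where
  "concepts sw nw R \<sigma> = {(g, f). up_op sw R \<sigma> g = f \<and> down_op nw R \<sigma> f = g}"

definition cle :: "('b \<Rightarrow> 'l::complete_lattice) \<times> ('a \<Rightarrow> 'l) \<Rightarrow> ('b \<Rightarrow> 'l) \<times> ('a \<Rightarrow> 'l) \<Rightarrow> bool" where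
  "cle p q \<longleftrightarrow> fst p \<le> fst q"

definition ctop :: "('b \<Rightarrow> 'l::complete_lattice) \<times> ('a \<Rightarrow> 'l)" where
  "ctop = ((\<lambda>b. top), (\<lambda>a. bot))"

definition cbot :: "('b \<Rightarrow> 'l::complete_lattice) \<times> ('a \<Rightarrow> 'l)" where
  "cbot = ((\<lambda>b. bot), (\<lambda>a. top))"

definition is_glb :: "('x \<Rightarrow> 'x \<Rightarrow> bool) \<Rightarrow> 'x set \<Rightarrow> 'x \<Rightarrow> 'x \<Rightarrow> 'x \<Rightarrow> bool" where
  "is_glb le M x y z \<longleftrightarrow> z \<in> M \<and> le z x \<and> le z y \<and> (\<forall>w\<in>M. le w x \<and> le w y \<longrightarrow> le w z)"

definition is_lub :: "('x \<Rightarrow> 'x \<Rightarrow> bool) \<Rightarrow> 'x set \<Rightarrow> 'x \<Rightarrow> 'x \<Rightarrow> 'x \<Rightarrow> bool" where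
  "is_lub le M x y z \<longleftrightarrow> z \<in> M \<and> le x z \<and> le y z \<and> (\<forall>w\<in>M. le x w \<and> le y w \<longrightarrow> le z w)"

definition sublattice :: "('x \<Rightarrow> 'x \<Rightarrow> bool) \<Rightarrow> 'x set \<Rightarrow> 'x set \<Rightarrow> bool" where
  "sublattice le M K \<longleftrightarrow> K \<noteq> {} \<and> K \<subseteq> M \<and>
     (\<forall>x\<in>K. \<forall>y\<in>K. \<forall>z. is_glb le M x y z \<longrightarrow> z \<in> K) \<and>
     (\<forall>x\<in>K. \<forall>y\<in>K. \<forall>z. is_lub le M x y z \<longrightarrow> z \<in> K)"

definition is_block :: "('x \<Rightarrow> 'x \<Rightarrow> bool) \<Rightarrow> 'x set \<Rightarrow> 'x \<Rightarrow> 'x \<Rightarrow> 'x set \<Rightarrow> bool" where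
  "is_block le M bt tp K \<longleftrightarrow> sublattice le M K \<and> K \<subset> M \<and> K - {bt, tp} \<noteq> {} \<and>
     (\<forall>k \<in> K - {bt, tp}. ({x\<in>M. le k x} \<union> {x\<in>M. le x k}) - {bt, tp} \<subseteq> K)"

definition independent_blocks :: "'x \<Rightarrow> 'x \<Rightarrow> 'x set \<Rightarrow> 'x set \<Rightarrow> bool" where
  "independent_blocks bt tp K1 K2 \<longleftrightarrow> K1 \<inter> K2 \<subseteq> {bt, tp}"

definition block_decomposition ::
  "('x \<Rightarrow> 'x \<Rightarrow> bool) \<Rightarrow> 'x set \<Rightarrow> 'x \<Rightarrow> 'x \<Rightarrow> 'i set \<Rightarrow> ('i \<Rightarrow> 'x set) \<Rightarrow> bool" where
  "block_decomposition le M bt tp \<Lambda> K \<longleftrightarrow>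
     (\<forall>\<mu>\<in>\<Lambda>. is_block le M bt tp (K \<mu>)) \<and>
     (\<forall>\<mu>\<in>\<Lambda>. \<forall>\<nu>\<in>\<Lambda>. \<mu> \<noteq> \<nu> \<longrightarrow> independent_blocks bt tp (K \<mu>) (K \<nu>)) \<and>
     (\<Union>\<mu>\<in>\<Lambda>. K \<mu>) = M"

definition phiA :: "'a \<Rightarrow> 'l::complete_lattice \<Rightarrow> 'a \<Rightarrow> 'l" where
  "phiA a x = (\<lambda>a'. if a' = a then x else bot)"

definition phiB :: "'b \<Rightarrow> 'l::complete_lattice \<Rightarrow> 'b \<Rightarrow> 'l" where
  "phiB b y = (\<lambda>b'. if b' = b then y else bot)"

definition A_mu ::
  "(nat \<Rightarrow> 'l \<Rightarrow> 'l \<Rightarrow> 'l::complete_lattice) \<Rightarrow> (nat \<Rightarrow> 'l \<Rightarrow> 'l \<Rightarrow> 'l) \<Rightarrow> ('a \<Rightarrow> 'b \<Rightarrow> 'l)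
    \<Rightarrow> ('a \<Rightarrow> 'b \<Rightarrow> nat) \<Rightarrow> (('b \<Rightarrow> 'l) \<times> ('a \<Rightarrow> 'l)) set \<Rightarrow> 'a set" where
  "A_mu sw nw R \<sigma> K = {a. \<exists>x.
     (down_op nw R \<sigma> (phiA a x), up_op sw R \<sigma> (down_op nw R \<sigma> (phiA a x))) \<in> K - {ctop, cbot}}"

definition B_mu ::
  "(nat \<Rightarrow> 'l \<Rightarrow> 'l \<Rightarrow> 'l::complete_lattice) \<Rightarrow> (nat \<Rightarrow> 'l \<Rightarrow> 'l \<Rightarrow> 'l) \<Rightarrow> ('a \<Rightarrow> 'b \<Rightarrow> 'l)
    \<Rightarrow> ('a \<Rightarrow> 'b \<Rightarrow> nat) \<Rightarrow> (('b \<Rightarrow> 'l) \<times> ('a \<Rightarrow> 'l)) set \<Rightarrow> 'b set" where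
  "B_mu sw nw R \<sigma> K = {b. \<exists>y.
     (down_op nw R \<sigma> (up_op sw R \<sigma> (phiB b y)), up_op sw R \<sigma> (phiB b y)) \<in> K - {ctop, cbot}}"

text \<open>(Y, X, R restricted, \<sigma> restricted) is a separable subcontext of (A,B,R,\<sigma>) with A = UNIV,
  B = UNIV. The restrictions are determined by Y, X, so only Y, X and R are parameters.\<close>
definition separable_subcontext :: "('a \<Rightarrow> 'b \<Rightarrow> 'l::complete_lattice) \<Rightarrow> 'a set \<Rightarrow> 'b set \<Rightarrow> bool" where
  "separable_subcontext R Y X \<longleftrightarrow>
     Y \<noteq> {} \<and> X \<noteq> {} \<and> Y \<subset> UNIV \<and> X \<subset> UNIV \<and>
     (\<exists>a\<in>Y. \<exists>b\<in>X. R a b \<noteq> bot) \<and>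
     (\<forall>a\<in>Y. \<forall>b'. b' \<notin> X \<longrightarrow> R a b' = bot) \<and>
     (\<forall>a'. \<forall>b\<in>X. a' \<notin> Y \<longrightarrow> R a' b = bot)"

end

theory Submission
  imports Defs
begin

(* For a non-zero entry R a b, the concept generated by attribute b with degree R a b lies below
   both the object concept of (a, top), whose extent is R a, and the attribute concept of (b, top),
   whose intent is R(-, b), and it is non-trivial. A block contains everything comparable to its
   non-trivial members, so it contains the object concept of a iff it contains the attribute
   concept of b: a lies in A_mu iff b lies in B_mu, which separates the zero entries. Every block
   contains some attribute concept and distinct blocks share no non-trivial concept, so A_mu and
   B_mu are non-empty and proper. *)

lemma block_absorbs_comparable:
  assumes "is_block le M bt tp K" "k \<in> K - {bt, tp}" "x \<in> M - {bt, tp}" "le k x \<or> le x k"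
  shows "x \<in> K"
  using assms unfolding is_block_def by blast

lemma block_decomposition_block:
  "block_decomposition le M bt tp \<Lambda> K \<Longrightarrow> \<mu> \<in> \<Lambda> \<Longrightarrow> is_block le M bt tp (K \<mu>)"
  unfolding block_decomposition_def by blast

lemma block_decomposition_independent:
  "block_decomposition le M bt tp \<Lambda> K \<Longrightarrow> \<mu> \<in> \<Lambda> \<Longrightarrow> \<nu> \<in> \<Lambda> \<Longrightarrow> \<mu> \<noteq> \<nu>
    \<Longrightarrow> K \<mu> \<inter> K \<nu> \<subseteq> {bt, tp}"
  unfolding block_decomposition_def independent_blocks_def by blast

lemma block_decomposition_other_block:
  assumes "block_decomposition le M bt tp \<Lambda> K" "\<mu> \<in> \<Lambda>"
  obtains \<nu> where "\<nu> \<in> \<Lambda>" "\<nu> \<noteq> \<mu>"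
proof -
  have "K \<mu> \<subset> M" "(\<Union>\<nu>\<in>\<Lambda>. K \<nu>) = M"
    using assms unfolding block_decomposition_def is_block_def by blast+
  then have "\<Lambda> \<noteq> {\<mu>}" by auto
  with assms(2) that show thesis by blast
qed

locale multi_adjoint_context =
  fixes cj sw nw :: "nat \<Rightarrow> 'l::complete_lattice \<Rightarrow> 'l \<Rightarrow> 'l"
    and R :: "'a \<Rightarrow> 'b \<Rightarrow> 'l"
    and \<sigma> :: "'a \<Rightarrow> 'b \<Rightarrow> nat"
  assumes adjoint: "\<And>a b. adjoint_triple (cj (\<sigma> a b)) (sw (\<sigma> a b)) (nw (\<sigma> a b))"
begin

abbreviation "up \<equiv> up_op sw R \<sigma>"
abbreviation "down \<equiv> down_op nw R \<sigma>"
abbreviation "\<M> \<equiv> concepts sw nw R \<sigma>"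

definition obj_concept :: "'a \<Rightarrow> 'l \<Rightarrow> ('b \<Rightarrow> 'l) \<times> ('a \<Rightarrow> 'l)" where
  "obj_concept a x = (down (phiA a x), up (down (phiA a x)))"

definition attr_concept :: "'b \<Rightarrow> 'l \<Rightarrow> ('b \<Rightarrow> 'l) \<times> ('a \<Rightarrow> 'l)" where
  "attr_concept b y = (down (up (phiB b y)), up (phiB b y))"

lemma le_sw_iff: "x \<le> sw (\<sigma> a b) z y \<longleftrightarrow> cj (\<sigma> a b) x y \<le> z"
  using adjoint unfolding adjoint_triple_def by blast

lemma cj_le_iff: "cj (\<sigma> a b) x y \<le> z \<longleftrightarrow> y \<le> nw (\<sigma> a b) z x"
  using adjoint unfolding adjoint_triple_def by blast

lemma sw_bot: "sw (\<sigma> a b) z bot = top"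
  by (rule top_le) (simp add: le_sw_iff cj_le_iff)

lemma nw_bot: "nw (\<sigma> a b) z bot = top"
  by (rule top_le) (simp add: cj_le_iff[symmetric] le_sw_iff[symmetric])

lemma le_down_iff_le_up: "g \<le> down f \<longleftrightarrow> f \<le> up g"
proof -
  have "g \<le> down f \<longleftrightarrow> (\<forall>a b. g b \<le> nw (\<sigma> a b) (R a b) (f a))"
    unfolding down_op_def le_fun_def by (auto simp: le_INF_iff)
  also have "\<dots> \<longleftrightarrow> (\<forall>a b. f a \<le> sw (\<sigma> a b) (R a b) (g b))"
    using le_sw_iff cj_le_iff by blast
  also have "\<dots> \<longleftrightarrow> f \<le> up g"
    unfolding up_op_def le_fun_def by (auto simp: le_INF_iff)
  finally show ?thesis .
qed

lemma le_down_up: "g \<le> down (up g)"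
  by (simp add: le_down_iff_le_up)

lemma le_up_down: "f \<le> up (down f)"
  by (simp add: le_down_iff_le_up[symmetric])

lemma down_antimono:
  assumes "f \<le> f'"
  shows "down f' \<le> down f"
proof -
  have "f \<le> up (down f')" using assms le_up_down by (rule order_trans)
  then show ?thesis by (simp add: le_down_iff_le_up)
qed

lemma up_antimono:
  assumes "g \<le> g'"
  shows "up g' \<le> up g"
proof -
  have "g \<le> down (up g')" using assms le_down_up by (rule order_trans)
  then show ?thesis by (simp add: le_down_iff_le_up)
qed

lemma up_down_up: "up (down (up g)) = up g"
  by (rule antisym[OF up_antimono[OF le_down_up] le_up_down])

lemma down_up_down: "down (up (down f)) = down f"
  by (rule antisym[OF down_antimono[OF le_up_down] le_down_up])

lemma up_bot: "up (\<lambda>b. bot) = (\<lambda>a. top)"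
  unfolding up_op_def by (simp add: sw_bot)

lemma concept_eq_cbot: "(g, f) \<in> \<M> \<Longrightarrow> g = (\<lambda>b. bot) \<Longrightarrow> (g, f) = cbot"
  unfolding concepts_def cbot_def using up_bot by auto

lemma obj_concept_in_concepts: "obj_concept a x \<in> \<M>"
  unfolding obj_concept_def concepts_def by (simp add: down_up_down)

lemma attr_concept_in_concepts: "attr_concept b y \<in> \<M>"
  unfolding attr_concept_def concepts_def by (simp add: up_down_up)

lemma obj_concept_antimono:
  assumes "x \<le> x'"
  shows "cle (obj_concept a x') (obj_concept a x)"
proof -
  have "phiA a x \<le> phiA a x'" using assms by (simp add: phiA_def le_fun_def)
  then show ?thesis by (simp add: cle_def obj_concept_def down_antimono)
qed

lemma attr_concept_mono:
  assumes "y \<le> y'"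
  shows "cle (attr_concept b y) (attr_concept b y')"
proof -
  have "phiB b y \<le> phiB b y'" using assms by (simp add: phiB_def le_fun_def)
  then show ?thesis by (simp add: cle_def attr_concept_def down_antimono up_antimono)
qed

lemma attr_concept_below:
  assumes "(g, f) \<in> \<M>"
  shows "cle (attr_concept b (g b)) (g, f)"
proof -
  have "phiB b (g b) \<le> g" by (simp add: phiB_def le_fun_def)
  then have "down (up (phiB b (g b))) \<le> down (up g)" by (simp add: down_antimono up_antimono)
  with assms show ?thesis by (simp add: cle_def attr_concept_def concepts_def)
qed

lemma obj_concept_above:
  assumes "(g, f) \<in> \<M>"
  shows "cle (g, f) (obj_concept a (f a))"
proof -
  have "phiA a (f a) \<le> f" by (simp add: phiA_def le_fun_def)
  then have "down f \<le> down (phiA a (f a))" by (rule down_antimono)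
  with assms show ?thesis by (simp add: cle_def obj_concept_def concepts_def)
qed

lemma attr_concept_extent_at: "y \<le> fst (attr_concept b y) b"
  using le_funD[OF le_down_up[of "phiB b y"], of b]
  by (simp add: attr_concept_def phiB_def)

lemma obj_concept_intent_at: "x \<le> snd (obj_concept a x) a"
  using le_funD[OF le_up_down[of "phiA a x"], of a]
  by (simp add: obj_concept_def phiA_def)

end

locale normalized_multi_adjoint_context = multi_adjoint_context cj sw nw R \<sigma>
  for cj sw nw :: "nat \<Rightarrow> 'l::complete_lattice \<Rightarrow> 'l \<Rightarrow> 'l"
    and R :: "'a \<Rightarrow> 'b \<Rightarrow> 'l"
    and \<sigma> :: "'a \<Rightarrow> 'b \<Rightarrow> nat" +
  assumes top_unit: "\<And>a b x. cj (\<sigma> a b) x top = x \<and> cj (\<sigma> a b) top x = x"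
    and normalized: "normalized_context R"
begin

lemma bot_neq_top: "(bot::'l) \<noteq> top"
proof
  assume "(bot::'l) = top"
  then have "R a b = bot" for a b by (metis top_greatest bot_unique)
  with normalized show False unfolding normalized_context_def by blast
qed

lemma sw_top: "sw (\<sigma> a b) z top = z"
proof -
  have "x \<le> sw (\<sigma> a b) z top \<longleftrightarrow> x \<le> z" for x
    using le_sw_iff top_unit by simp
  then show ?thesis by (meson antisym order_refl)
qed

lemma nw_top: "nw (\<sigma> a b) z top = z"
proof -
  have "y \<le> nw (\<sigma> a b) z top \<longleftrightarrow> y \<le> z" for y
    using cj_le_iff[symmetric] top_unit by simp
  then show ?thesis by (meson antisym order_refl)
qed

lemma extent_obj_concept_top: "fst (obj_concept a top) = R a"
proof
  fix b
  have "(INF a'. nw (\<sigma> a' b) (R a' b) (phiA a top a')) = R a b"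
  proof (rule antisym)
    show "(INF a'. nw (\<sigma> a' b) (R a' b) (phiA a top a')) \<le> R a b"
      by (rule INF_lower2[of a]) (simp_all add: phiA_def nw_top)
    show "R a b \<le> (INF a'. nw (\<sigma> a' b) (R a' b) (phiA a top a'))"
      by (rule INF_greatest) (simp add: phiA_def nw_top nw_bot)
  qed
  then show "fst (obj_concept a top) b = R a b"
    by (simp add: obj_concept_def down_op_def)
qed

lemma intent_attr_concept_top: "snd (attr_concept b top) = (\<lambda>a. R a b)"
proof
  fix a
  have "(INF b'. sw (\<sigma> a b') (R a b') (phiB b top b')) = R a b"
  proof (rule antisym)
    show "(INF b'. sw (\<sigma> a b') (R a b') (phiB b top b')) \<le> R a b"
      by (rule INF_lower2[of b]) (simp_all add: phiB_def sw_top)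
    show "R a b \<le> (INF b'. sw (\<sigma> a b') (R a b') (phiB b top b'))"
      by (rule INF_greatest) (simp add: phiB_def sw_top sw_bot)
  qed
  then show "snd (attr_concept b top) a = R a b"
    by (simp add: attr_concept_def up_op_def)
qed

lemma up_top: "up (\<lambda>b. top) = (\<lambda>a. bot)"
proof
  fix a
  from normalized obtain b where "R a b = bot"
    unfolding normalized_context_def by blast
  moreover have "up (\<lambda>b. top) a \<le> sw (\<sigma> a b) (R a b) top"
    unfolding up_op_def by (rule INF_lower) simp
  ultimately show "up (\<lambda>b. top) a = bot" by (simp add: sw_top bot_unique)
qed

lemma concept_eq_ctop: "(g, f) \<in> \<M> \<Longrightarrow> g = (\<lambda>b. top) \<Longrightarrow> (g, f) = ctop"
  unfolding concepts_def ctop_def using up_top by auto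

lemma obj_concept_top_nontrivial: "obj_concept a top \<notin> {ctop, cbot}"
proof -
  from normalized obtain b1 b2 where "R a b1 \<noteq> bot" "R a b2 = bot"
    unfolding normalized_context_def by blast
  with extent_obj_concept_top[of a] bot_neq_top show ?thesis
    unfolding ctop_def cbot_def by (auto dest: fun_cong[of _ _ b1] fun_cong[of _ _ b2])
qed

lemma attr_concept_top_nontrivial: "attr_concept b top \<notin> {ctop, cbot}"
proof -
  from normalized obtain a1 a2 where "R a1 b \<noteq> bot" "R a2 b = bot"
    unfolding normalized_context_def by blast
  with intent_attr_concept_top[of b] bot_neq_top show ?thesis
    unfolding ctop_def cbot_def by (auto dest: fun_cong[of _ _ a1] fun_cong[of _ _ a2])
qed

context
  fixes K :: "(('b \<Rightarrow> 'l) \<times> ('a \<Rightarrow> 'l)) set"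
  assumes block: "is_block cle \<M> cbot ctop K"
begin

lemma block_absorbs:
  assumes "k \<in> K" "k \<notin> {ctop, cbot}" "x \<in> \<M>" "x \<notin> {ctop, cbot}" "cle k x \<or> cle x k"
  shows "x \<in> K"
  using block_absorbs_comparable[OF block] assms by blast

lemma block_subset_concepts: "K \<subseteq> \<M>"
  using block unfolding is_block_def sublattice_def by blast

lemma attr_concept_top_in_block:
  assumes p: "(g, f) \<in> K" "(g, f) \<notin> {ctop, cbot}" and gb: "g b \<noteq> bot"
  shows "attr_concept b top \<in> K"
proof -
  let ?D = "attr_concept b (g b)"
  have "(g, f) \<in> \<M>" using p block_subset_concepts by blast
  then have below: "cle ?D (g, f)" by (rule attr_concept_below)
  have "?D \<noteq> ctop"
  proof
    assume "?D = ctop"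
    with below have "g = (\<lambda>b. top)" by (auto simp: cle_def ctop_def le_fun_def top_unique)
    with p \<open>(g, f) \<in> \<M>\<close> show False using concept_eq_ctop by blast
  qed
  moreover have "?D \<noteq> cbot"
    using attr_concept_extent_at[of "g b" b] gb by (auto simp: cbot_def bot_unique)
  ultimately have D: "?D \<notin> {ctop, cbot}" by blast
  have "?D \<in> K" using block_absorbs[OF p attr_concept_in_concepts D] below by blast
  then show ?thesis
    using block_absorbs[OF _ D attr_concept_in_concepts attr_concept_top_nontrivial]
      attr_concept_mono[OF top_greatest]
    by blast
qed

lemma obj_concept_top_in_block:
  assumes p: "(g, f) \<in> K" "(g, f) \<notin> {ctop, cbot}" and fa: "f a \<noteq> bot"
  shows "obj_concept a top \<in> K"
proof -
  let ?C = "obj_concept a (f a)"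
  have "(g, f) \<in> \<M>" using p block_subset_concepts by blast
  then have above: "cle (g, f) ?C" by (rule obj_concept_above)
  have "?C \<noteq> cbot"
  proof
    assume "?C = cbot"
    with above have "g = (\<lambda>b. bot)" by (auto simp: cle_def cbot_def le_fun_def bot_unique)
    with p \<open>(g, f) \<in> \<M>\<close> show False using concept_eq_cbot by blast
  qed
  moreover have "?C \<noteq> ctop"
    using obj_concept_intent_at[of "f a" a] fa by (auto simp: ctop_def bot_unique)
  ultimately have C: "?C \<notin> {ctop, cbot}" by blast
  have "?C \<in> K" using block_absorbs[OF p obj_concept_in_concepts C] above by blast
  then show ?thesis
    using block_absorbs[OF _ C obj_concept_in_concepts obj_concept_top_nontrivial]
      obj_concept_antimono[OF top_greatest]
    by blast
qed

lemma A_mu_block_iff: "a \<in> A_mu sw nw R \<sigma> K \<longleftrightarrow> obj_concept a top \<in> K"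
proof
  assume "a \<in> A_mu sw nw R \<sigma> K"
  then obtain x where "obj_concept a x \<in> K" "obj_concept a x \<notin> {ctop, cbot}"
    unfolding A_mu_def obj_concept_def by blast
  then show "obj_concept a top \<in> K"
    by (rule block_absorbs[OF _ _ obj_concept_in_concepts obj_concept_top_nontrivial])
      (use obj_concept_antimono[OF top_greatest] in blast)
next
  assume "obj_concept a top \<in> K"
  then show "a \<in> A_mu sw nw R \<sigma> K"
    using obj_concept_top_nontrivial unfolding A_mu_def obj_concept_def by blast
qed

lemma B_mu_block_iff: "b \<in> B_mu sw nw R \<sigma> K \<longleftrightarrow> attr_concept b top \<in> K"
proof
  assume "b \<in> B_mu sw nw R \<sigma> K"
  then obtain y where "attr_concept b y \<in> K" "attr_concept b y \<notin> {ctop, cbot}"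
    unfolding B_mu_def attr_concept_def by blast
  then show "attr_concept b top \<in> K"
    by (rule block_absorbs[OF _ _ attr_concept_in_concepts attr_concept_top_nontrivial])
      (use attr_concept_mono[OF top_greatest] in blast)
next
  assume "attr_concept b top \<in> K"
  then show "b \<in> B_mu sw nw R \<sigma> K"
    using attr_concept_top_nontrivial unfolding B_mu_def attr_concept_def by blast
qed

lemma A_mu_iff_B_mu:
  assumes "R a b \<noteq> bot"
  shows "a \<in> A_mu sw nw R \<sigma> K \<longleftrightarrow> b \<in> B_mu sw nw R \<sigma> K"
  unfolding A_mu_block_iff B_mu_block_iff
proof
  assume "obj_concept a top \<in> K"
  moreover have "fst (obj_concept a top) b \<noteq> bot"
    using assms by (simp add: extent_obj_concept_top)
  ultimately show "attr_concept b top \<in> K"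
    using attr_concept_top_in_block obj_concept_top_nontrivial
    by (metis Diff_iff prod.collapse)
next
  assume "attr_concept b top \<in> K"
  moreover have "snd (attr_concept b top) a \<noteq> bot"
    using assms by (simp add: intent_attr_concept_top)
  ultimately show "obj_concept a top \<in> K"
    using obj_concept_top_in_block attr_concept_top_nontrivial
    by (metis Diff_iff prod.collapse)
qed

lemma block_meets_A_mu_B_mu:
  obtains a b where "R a b \<noteq> bot" "a \<in> A_mu sw nw R \<sigma> K" "b \<in> B_mu sw nw R \<sigma> K"
proof -
  obtain g f where p: "(g, f) \<in> K - {ctop, cbot}"
    using block unfolding is_block_def by auto
  moreover have "(g, f) \<in> \<M>" using p block_subset_concepts by blast
  ultimately obtain b where "g b \<noteq> bot" using concept_eq_cbot by blast
  with p have "b \<in> B_mu sw nw R \<sigma> K"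
    using attr_concept_top_in_block B_mu_block_iff by blast
  moreover obtain a where "R a b \<noteq> bot"
    using normalized unfolding normalized_context_def by blast
  ultimately show thesis using that A_mu_iff_B_mu by blast
qed

end

lemma independent_blocks_disjoint:
  assumes "is_block cle \<M> cbot ctop K" "is_block cle \<M> cbot ctop K'"
    and "K \<inter> K' \<subseteq> {cbot, ctop}"
  shows "A_mu sw nw R \<sigma> K \<inter> A_mu sw nw R \<sigma> K' = {}"
    and "B_mu sw nw R \<sigma> K \<inter> B_mu sw nw R \<sigma> K' = {}"
  using assms A_mu_block_iff B_mu_block_iff obj_concept_top_nontrivial attr_concept_top_nontrivial
  by blast+

end

theorem proposition35:
  fixes cj sw nw :: "nat \<Rightarrow> 'l::complete_lattice \<Rightarrow> 'l \<Rightarrow> 'l"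
    and n :: nat
    and R :: "'a \<Rightarrow> 'b \<Rightarrow> 'l"
    and \<sigma> :: "'a \<Rightarrow> 'b \<Rightarrow> nat"
    and \<Lambda> :: "'i set"
    and K :: "'i \<Rightarrow> (('b \<Rightarrow> 'l) \<times> ('a \<Rightarrow> 'l)) set"
  assumes adj: "\<forall>i\<in>{1..n}. adjoint_triple (cj i) (sw i) (nw i)"
    and unit: "\<forall>i\<in>{1..n}. \<forall>x. cj i x top = x \<and> cj i top x = x"
    and sigma_range: "\<forall>a b. \<sigma> a b \<in> {1..n}"
    and norm: "normalized_context R"
    and decomp: "block_decomposition cle (concepts sw nw R \<sigma>) cbot ctop \<Lambda> K"
    and mu: "\<mu> \<in> \<Lambda>"
  shows "separable_subcontext R (A_mu sw nw R \<sigma> (K \<mu>)) (B_mu sw nw R \<sigma> (K \<mu>))"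
proof -
  interpret normalized_multi_adjoint_context cj sw nw R \<sigma>
    using adj unit sigma_range norm by unfold_locales auto
  let ?Y = "A_mu sw nw R \<sigma>" and ?X = "B_mu sw nw R \<sigma>"
  have block: "is_block cle \<M> cbot ctop (K \<mu>)"
    using decomp mu by (rule block_decomposition_block)
  obtain a b where ab: "R a b \<noteq> bot" "a \<in> ?Y (K \<mu>)" "b \<in> ?X (K \<mu>)"
    using block_meets_A_mu_B_mu[OF block] by blast
  obtain \<nu> where \<nu>: "\<nu> \<in> \<Lambda>" "\<nu> \<noteq> \<mu>"
    using decomp mu by (rule block_decomposition_other_block)
  have block': "is_block cle \<M> cbot ctop (K \<nu>)"
    using decomp \<nu>(1) by (rule block_decomposition_block)
  obtain a' b' where "a' \<in> ?Y (K \<nu>)" "b' \<in> ?X (K \<nu>)"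
    using block_meets_A_mu_B_mu[OF block'] by blast
  with independent_blocks_disjoint[OF block block']
    block_decomposition_independent[OF decomp mu \<nu>(1) \<nu>(2)[symmetric]]
  have proper: "a' \<notin> ?Y (K \<mu>)" "b' \<notin> ?X (K \<mu>)" by blast+
  show ?thesis
    unfolding separable_subcontext_def using ab proper A_mu_iff_B_mu[OF block] by blast
qed

end
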